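(* Let $X$ be a smooth real Banach space of finite dimension $n$, let $S_X$ be its unit sphere, and let $S^n_{X,>0}$ be the set of $n$-tuples $(v_1,\dots,v_n)\in S_X^n$ (viewed as $n\times n$ real matrices with rows $v_i$) that are linearly independent, regarded as a differentiable manifold. Then $\{v_1,\dots,v_n\}$ is an Auerbach basis of $X$ if and only if $(v_1,\dots,v_n)$ is a critical point of the determinant function $\det: S^n_{X,>0}\to\mathbb{R}$, i.e. $\sum_{k=1}^n \det(v_1,\dots,v_{k-1},u_k,v_{k+1},\dots,v_n)=0$ for all $u_k$ in the tangent space $T_{v_k}S_X$, $k=1,\dots,n$.
   Context: A Banach space is smooth if at every point of the unit sphere there is exactly one supporting hyperplane of the unit ball (equivalently, the norm is Gateaux differentiable at every nonzero point). In a real normed space $X$, $x\perp_B y$ (Birkhoff–James orthogonality) means $\|x\|\le\|x+\lambda y\|$ for all $\lambda\in\mathbb{R}$. A basis $\mathcal{B}$ of $X$ is an Auerbach basis if every $v\in\mathcal{B}$ satisfies $\|v\|=1$ and $v\perp_B w$ for all $w\in\mathrm{span}(\mathcal{B}\setminus\{v\})$. *)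

theory Defs
  imports "HOL-Analysis.Analysis"
begin

text \<open>The finite-dimensional real Banach space X of dimension n is modelled as
  real^'n (n = CARD('n)) equipped with an arbitrary norm N.\<close>

definition is_norm :: "('a::real_vector \<Rightarrow> real) \<Rightarrow> bool" where
  "is_norm N \<longleftrightarrow>
     (\<forall>x. 0 \<le> N x) \<and> (\<forall>x. N x = 0 \<longleftrightarrow> x = 0) \<and>
     (\<forall>c x. N (c *\<^sub>R x) = \<bar>c\<bar> * N x) \<and> (\<forall>x y. N (x + y) \<le> N x + N y)"

definition smooth_norm :: "('a::real_vector \<Rightarrow> real) \<Rightarrow> bool" where
  "smooth_norm N \<longleftrightarrow>
     (\<forall>x. x \<noteq> 0 \<longrightarrow> (\<exists>L. linear L \<and>
        (\<forall>y. ((\<lambda>t. N (x + t *\<^sub>R y)) has_real_derivative L y) (at 0))))"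

definition unit_sphere :: "('a \<Rightarrow> real) \<Rightarrow> 'a set" where
  "unit_sphere N = {x. N x = 1}"

definition tangent_space :: "'a::real_normed_vector set \<Rightarrow> 'a \<Rightarrow> 'a set" where
  "tangent_space S v = {u. \<exists>\<gamma> e. e > 0 \<and> (\<forall>t\<in>{-e<..<e}. \<gamma> t \<in> S) \<and> \<gamma> 0 = v \<and>
       (\<gamma> has_vector_derivative u) (at 0)}"

definition birkhoff_orth :: "('a::real_vector \<Rightarrow> real) \<Rightarrow> 'a \<Rightarrow> 'a \<Rightarrow> bool" where
  "birkhoff_orth N x y \<longleftrightarrow> (\<forall>c::real. N x \<le> N (x + c *\<^sub>R y))"

definition auerbach_basis :: "('a::real_vector \<Rightarrow> real) \<Rightarrow> 'a set \<Rightarrow> bool" where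
  "auerbach_basis N B \<longleftrightarrow>
     independent B \<and> span B = UNIV \<and>
     (\<forall>w\<in>B. N w = 1 \<and> (\<forall>y\<in>span (B - {w}). birkhoff_orth N w y))"

end

theory Submission imports Defs begin

(* At a unit vector w the norm has a Gateaux derivative L, a linear functional with L w \<noteq> 0.
  By convexity of t \<mapsto> N (w + t y), w is Birkhoff-James orthogonal to y iff L y = 0, and the
  tangent space of the unit sphere at w is exactly the kernel of L.  Replacing the k-th row of
  the matrix (v i) by u gives determinant zero iff u lies in the hyperplane H k spanned by the
  other rows.  So (v i) is an Auerbach basis iff H k is contained in the kernel of the derivative
  at v k for every k; testing the critical point condition on tangent vectors supported at a
  single index shows it is equivalent to the reverse inclusions.  Both are hyperplanes not
  containing v k, so each inclusion implies the other. *)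

lemma is_norm_0: "is_norm N \<Longrightarrow> N 0 = 0"
  unfolding is_norm_def by auto

lemma is_norm_nonneg: "is_norm N \<Longrightarrow> 0 \<le> N x"
  unfolding is_norm_def by auto

lemma is_norm_scaleR: "is_norm N \<Longrightarrow> N (c *\<^sub>R x) = \<bar>c\<bar> * N x"
  unfolding is_norm_def by auto

lemma is_norm_triangle: "is_norm N \<Longrightarrow> N (x + y) \<le> N x + N y"
  unfolding is_norm_def by auto

lemma is_norm_minus: "is_norm N \<Longrightarrow> N (- x) = N x"
  using is_norm_scaleR[of N "-1" x] by simp

lemma is_norm_abs_diff_le: "is_norm N \<Longrightarrow> \<bar>N x - N y\<bar> \<le> N (x - y)"
  using is_norm_triangle[of N "x - y" y] is_norm_triangle[of N "y - x" x]
    is_norm_minus[of N "x - y"] by (simp add: abs_le_iff)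

lemma is_norm_sum: "is_norm N \<Longrightarrow> N (sum f A) \<le> (\<Sum>a\<in>A. N (f a))"
proof (induction A rule: infinite_finite_induct)
  case (insert a A)
  then show ?case using is_norm_triangle[of N "f a" "sum f A"] by simp
qed (simp_all add: is_norm_0)

lemma is_norm_lipschitz:
  fixes N :: "'a::euclidean_space \<Rightarrow> real"
  assumes N: "is_norm N"
  obtains C where "\<And>x y. \<bar>N x - N y\<bar> \<le> C * norm (x - y)"
proof
  let ?C = "\<Sum>b\<in>Basis. N b"
  have bound: "N z \<le> ?C * norm z" for z
  proof -
    have "N z = N (\<Sum>b\<in>Basis. (z \<bullet> b) *\<^sub>R b)"
      by (simp add: euclidean_representation)
    also have "\<dots> \<le> (\<Sum>b\<in>Basis. N ((z \<bullet> b) *\<^sub>R b))"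
      by (rule is_norm_sum[OF N])
    also have "\<dots> = (\<Sum>b\<in>Basis. \<bar>z \<bullet> b\<bar> * N b)"
      by (simp add: is_norm_scaleR[OF N])
    also have "\<dots> \<le> (\<Sum>b\<in>Basis. norm z * N b)"
      by (intro sum_mono mult_right_mono) (simp_all add: Basis_le_norm is_norm_nonneg[OF N])
    finally show ?thesis by (simp add: sum_distrib_left mult.commute)
  qed
  show "\<bar>N x - N y\<bar> \<le> ?C * norm (x - y)" for x y
    using is_norm_abs_diff_le[OF N] bound order_trans by blast
qed

definition gateaux_derivative ::
    "('a::real_vector \<Rightarrow> real) \<Rightarrow> 'a \<Rightarrow> ('a \<Rightarrow> real) \<Rightarrow> bool" where
  "gateaux_derivative N w L \<longleftrightarrow>
     (\<forall>y. ((\<lambda>t. N (w + t *\<^sub>R y)) has_real_derivative L y) (at 0))"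

lemma convex_on_norm_line:
  assumes N: "is_norm N"
  shows "convex_on UNIV (\<lambda>t. N (w + t *\<^sub>R y))"
proof (rule convex_onI)
  fix a b s :: real
  assume s: "0 < s" "s < 1"
  have "w + ((1 - s) *\<^sub>R a + s *\<^sub>R b) *\<^sub>R y =
      (1 - s) *\<^sub>R (w + a *\<^sub>R y) + s *\<^sub>R (w + b *\<^sub>R y)"
    by (simp add: algebra_simps flip: scaleR_add_left)
  then show "N (w + ((1 - s) *\<^sub>R a + s *\<^sub>R b) *\<^sub>R y) \<le>
      (1 - s) * N (w + a *\<^sub>R y) + s * N (w + b *\<^sub>R y)"
    using is_norm_triangle[OF N, of "(1 - s) *\<^sub>R (w + a *\<^sub>R y)" "s *\<^sub>R (w + b *\<^sub>R y)"]
      is_norm_scaleR[OF N] s by simp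
qed simp

lemma birkhoff_orth_iff_gateaux_derivative_eq_0:
  assumes N: "is_norm N" and D: "gateaux_derivative N w L"
  shows "birkhoff_orth N w y \<longleftrightarrow> L y = 0"
proof -
  have dy: "((\<lambda>t. N (w + t *\<^sub>R y)) has_real_derivative L y) (at 0)"
    using D by (simp add: gateaux_derivative_def)
  show ?thesis
  proof
    assume "birkhoff_orth N w y"
    then show "L y = 0"
      using DERIV_local_min[OF dy, of 1] by (simp add: birkhoff_orth_def)
  next
    assume "L y = 0"
    then have "N (w + 0 *\<^sub>R y) \<le> N (w + c *\<^sub>R y)" for c
      using convex_on_imp_above_tangent[OF convex_on_norm_line[OF N] _ _ _ dy, of c] by simp
    then show "birkhoff_orth N w y"
      by (simp add: birkhoff_orth_def)
  qed
qed

lemma gateaux_derivative_self_neq_0: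
  assumes N: "is_norm N" and D: "gateaux_derivative N w L" and w: "w \<noteq> 0"
  shows "L w \<noteq> 0"
proof
  assume "L w = 0"
  then have "birkhoff_orth N w w"
    using birkhoff_orth_iff_gateaux_derivative_eq_0[OF N D] by simp
  then have "N w \<le> N (w + (-1) *\<^sub>R w)"
    unfolding birkhoff_orth_def by blast
  then have "N w \<le> 0"
    by (simp add: is_norm_0[OF N])
  then show False
    using w N unfolding is_norm_def by (metis order_antisym)
qed

lemma has_vector_derivative_line: "((\<lambda>t. w + t *\<^sub>R u) has_vector_derivative u) (at t)"
  unfolding has_vector_derivative_def by (auto intro!: derivative_eq_intros)

lemma gateaux_derivative_eq_0_if_tangent:
  fixes N :: "'a::euclidean_space \<Rightarrow> real"
  assumes N: "is_norm N" and D: "gateaux_derivative N w L"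
    and u: "u \<in> tangent_space (unit_sphere N) w"
  shows "L u = 0"
proof -
  obtain \<gamma> e where e: "e > 0" and S: "\<forall>t\<in>{-e<..<e}. N (\<gamma> t) = 1" and "\<gamma> 0 = w"
    and \<gamma>': "(\<gamma> has_vector_derivative u) (at 0)"
    using u unfolding tangent_space_def unit_sphere_def by blast
  obtain C where C: "\<And>x y. \<bar>N x - N y\<bar> \<le> C * norm (x - y)"
    using is_norm_lipschitz[OF N] by blast
  define g where "g t = \<gamma> t - (w + t *\<^sub>R u)" for t
  have "(g has_derivative (\<lambda>_. 0)) (at 0)"
    unfolding g_def
    using has_vector_derivative_diff[OF \<gamma>' has_vector_derivative_line[of w u 0]]
    by (simp add: has_vector_derivative_def)
  then have g: "((\<lambda>t. norm (g t) / norm t) \<longlongrightarrow> 0) (at 0)"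
    using \<open>\<gamma> 0 = w\<close> by (simp add: has_derivative_iff_norm g_def)
  define h where "h t = N (w + t *\<^sub>R u) - 1" for t
  \<comment> \<open>Since N (\<gamma> t) = 1 and N is Lipschitz, h t is bounded by C times norm (g t) = o(t).\<close>
  have h0: "h 0 = 0"
    using S e \<open>\<gamma> 0 = w\<close> by (force simp: h_def)
  have "\<forall>\<^sub>F t in at 0. norm ((h t - h 0) / (t - 0)) \<le> C * (norm (g t) / norm t)"
    unfolding eventually_at
  proof (intro exI[of _ e] conjI ballI impI)
    fix t :: real
    assume t: "t \<noteq> 0 \<and> dist t 0 < e"
    then have "\<bar>h t\<bar> = \<bar>N (w + t *\<^sub>R u) - N (\<gamma> t)\<bar>"
      using S by (simp add: h_def abs_less_iff)
    also have "\<dots> \<le> C * norm (g t)"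
      using C[of "w + t *\<^sub>R u" "\<gamma> t"] by (simp add: g_def norm_minus_commute)
    finally show "norm ((h t - h 0) / (t - 0)) \<le> C * (norm (g t) / norm t)"
      using h0 t by (simp add: divide_right_mono)
  qed (use e in auto)
  moreover have "((\<lambda>t. C * (norm (g t) / norm t)) \<longlongrightarrow> 0) (at 0)"
    using tendsto_mult_right_zero[OF g] by simp
  ultimately have "((\<lambda>t. (h t - h 0) / (t - 0)) \<longlongrightarrow> 0) (at 0)"
    by (rule Lim_null_comparison)
  then have "(h has_real_derivative 0) (at 0)"
    by (simp add: has_field_derivative_iff)
  moreover have "(h has_real_derivative L u) (at 0)"
    using D unfolding h_def gateaux_derivative_def by (auto intro!: derivative_eq_intros)
  ultimately show ?thesis
    using DERIV_unique by blast
qed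

lemma tangent_if_gateaux_derivative_eq_0:
  fixes N :: "'a::real_normed_vector \<Rightarrow> real"
  assumes N: "is_norm N" and D: "gateaux_derivative N w L" and w: "N w = 1" and "L u = 0"
  shows "u \<in> tangent_space (unit_sphere N) w"
proof -
  let ?n = "\<lambda>t. N (w + t *\<^sub>R u)"
  have dn: "(?n has_real_derivative 0) (at 0)"
    using D \<open>L u = 0\<close> unfolding gateaux_derivative_def by metis
  obtain e where e: "e > 0" and pos: "\<And>t. dist 0 t < e \<Longrightarrow> ?n t \<noteq> 0"
    using continuous_at_avoid[of 0 ?n 0] DERIV_isCont[OF dn] w by (auto simp: continuous_at)
  define \<gamma> where "\<gamma> t = inverse (?n t) *\<^sub>R (w + t *\<^sub>R u)" for t
  have "\<forall>t\<in>{-e<..<e}. \<gamma> t \<in> unit_sphere N"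
    using pos is_norm_nonneg[OF N]
    by (auto simp: \<gamma>_def unit_sphere_def is_norm_scaleR[OF N] dist_real_def abs_less_iff)
  moreover have "(\<gamma> has_vector_derivative u) (at 0)"
    unfolding \<gamma>_def
    using has_vector_derivative_scaleR[OF DERIV_inverse_fun[OF dn] has_vector_derivative_line] w
    by simp
  moreover have "\<gamma> 0 = w"
    using w by (simp add: \<gamma>_def)
  ultimately show ?thesis
    unfolding tangent_space_def using e by blast
qed

lemma tangent_space_unit_sphere_eq:
  fixes N :: "'a::euclidean_space \<Rightarrow> real"
  assumes "is_norm N" and "gateaux_derivative N w L" and "N w = 1"
  shows "tangent_space (unit_sphere N) w = {u. L u = 0}"
  using gateaux_derivative_eq_0_if_tangent[OF assms(1,2)]
    tangent_if_gateaux_derivative_eq_0[OF assms] by blast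

lemma span_subset_kernel_iff_kernel_subset_span:
  fixes L :: "'a::real_vector \<Rightarrow> real"
  assumes L: "linear L" and S: "span (insert w S) = UNIV" "w \<notin> span S" and Lw: "L w \<noteq> 0"
  shows "span S \<subseteq> {u. L u = 0} \<longleftrightarrow> {u. L u = 0} \<subseteq> span S"
proof
  assume S_ker: "span S \<subseteq> {u. L u = 0}"
  show "{u. L u = 0} \<subseteq> span S"
  proof
    fix u
    assume "u \<in> {u. L u = 0}"
    moreover obtain c where c: "u - c *\<^sub>R w \<in> span S"
      using S(1) span_breakdown_eq by blast
    ultimately have "c * L w = 0"
      using S_ker L by (auto simp: linear_diff linear_scale)
    then show "u \<in> span S"
      using c Lw by simp
  qed
next
  assume ker_S: "{u. L u = 0} \<subseteq> span S"
  show "span S \<subseteq> {u. L u = 0}"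
  proof
    fix y
    assume y: "y \<in> span S"
    define a where "a = L y / L w"
    have "L (y - a *\<^sub>R w) = 0"
      using L Lw by (simp add: linear_diff linear_scale a_def)
    then have "y - (y - a *\<^sub>R w) \<in> span S"
      using ker_S y by (blast intro: span_diff)
    then have "a = 0"
      using S(2) span_scale[of "a *\<^sub>R w" S "inverse a"] by (cases "a = 0") auto
    then show "y \<in> {u. L u = 0}"
      using Lw by (simp add: a_def)
  qed
qed

lemma independent_range_imp_not_in_span_others:
  assumes "inj v" "independent (range v)"
  shows "v k \<notin> span (v ` (UNIV - {k}))"
proof -
  have "range v - {v k} = v ` (UNIV - {k})"
    using assms(1) by (auto simp: inj_eq)
  moreover have "v k \<notin> span (range v - {v k})"
    using assms(2) unfolding dependent_def by blast
  ultimately show ?thesis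
    by simp
qed

lemma span_range_eq_UNIV:
  fixes v :: "'n::finite \<Rightarrow> real^'n"
  assumes "inj v" "independent (range v)"
  shows "span (range v) = UNIV"
  using card_eq_dim[of "range v" UNIV] assms by (simp add: card_image top_unique)

lemma span_insert_others_eq_UNIV:
  fixes v :: "'n::finite \<Rightarrow> real^'n"
  assumes "inj v" "independent (range v)"
  shows "span (insert (v k) (v ` (UNIV - {k}))) = UNIV"
proof -
  have "insert (v k) (v ` (UNIV - {k})) = range v"
    by blast
  then show ?thesis
    using span_range_eq_UNIV[OF assms] by simp
qed

lemma det_rows_neq_0:
  fixes v :: "'n::finite \<Rightarrow> real^'n"
  assumes "inj v" "independent (range v)"
  shows "det (\<chi> i. v i) \<noteq> 0"
proof -
  have "rows (\<chi> i. v i) = range v"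
    by (auto simp: rows_def row_def)
  then show ?thesis
    using assms by (simp add: det_eq_0_rank row_rank_def dim_eq_card_independent card_image)
qed

lemma det_replace_row:
  fixes v :: "'n::finite \<Rightarrow> real^'n"
  assumes "u - c *\<^sub>R v k \<in> span (v ` (UNIV - {k}))"
  shows "det (\<chi> i. if i = k then u else v i) = c * det (\<chi> i. v i)"
proof -
  let ?A = "(\<chi> i. if i = k then c *s v i else v i) :: real^'n^'n"
  have "{row j ?A |j. j \<noteq> k} = v ` (UNIV - {k})"
    by (auto simp: row_def)
  then have "det (\<chi> i. if i = k then row k ?A + (u - c *\<^sub>R v k) else row i ?A) = det ?A"
    using assms by (intro det_row_span) (simp add: span_vec_eq)
  moreover have "(\<chi> i. if i = k then row k ?A + (u - c *\<^sub>R v k) else row i ?A) =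
      (\<chi> i. if i = k then u else v i)"
    by (simp add: row_def vec_eq_iff scalar_mult_eq_scaleR)
  moreover have "det ?A = c * det (\<chi> i. v i)"
    using det_row_mul[of k c v v] by simp
  ultimately show ?thesis
    by simp
qed

lemma det_replace_row_eq_0_iff:
  fixes v :: "'n::finite \<Rightarrow> real^'n"
  assumes "inj v" "independent (range v)"
  shows "det (\<chi> i. if i = k then u else v i) = 0 \<longleftrightarrow> u \<in> span (v ` (UNIV - {k}))"
proof
  obtain c where c: "u - c *\<^sub>R v k \<in> span (v ` (UNIV - {k}))"
    using span_insert_others_eq_UNIV[OF assms] span_breakdown_eq by (metis UNIV_I)
  assume "det (\<chi> i. if i = k then u else v i) = 0"
  then have "c = 0"
    using det_replace_row[OF c] det_rows_neq_0[OF assms] by simp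
  then show "u \<in> span (v ` (UNIV - {k}))"
    using c by simp
next
  assume "u \<in> span (v ` (UNIV - {k}))"
  then show "det (\<chi> i. if i = k then u else v i) = 0"
    using det_replace_row[of u 0 v k] by simp
qed

lemma sum_det_replace_row_eq_0_iff:
  fixes v :: "'n::finite \<Rightarrow> real^'n" and T :: "'n \<Rightarrow> (real^'n) set"
  assumes "inj v" "independent (range v)" and T0: "\<And>k. 0 \<in> T k"
  shows "(\<forall>u. (\<forall>k. u k \<in> T k) \<longrightarrow>
            (\<Sum>k\<in>UNIV. det (\<chi> i. if i = k then u k else v i)) = 0) \<longleftrightarrow>
    (\<forall>k. T k \<subseteq> span (v ` (UNIV - {k})))"
proof safe
  fix k x
  assume crit: "\<forall>u. (\<forall>k. u k \<in> T k) \<longrightarrow>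
      (\<Sum>k\<in>UNIV. det (\<chi> i. if i = k then u k else v i)) = 0"
    and x: "x \<in> T k"
  define U where "U j = (if j = k then x else 0)" for j
  have "\<forall>j. U j \<in> T j"
    using x T0 by (simp add: U_def)
  then have "(\<Sum>j\<in>UNIV. det (\<chi> i. if i = j then U j else v i)) = 0"
    using crit by blast
  moreover have "det (\<chi> i. if i = j then U j else v i) =
      (if j = k then det (\<chi> i. if i = k then x else v i) else 0)" for j
    using det_row_0[of j v] by (simp add: U_def cong: if_cong)
  ultimately have "det (\<chi> i. if i = k then x else v i) = 0"
    by simp
  then show "x \<in> span (v ` (UNIV - {k}))"
    using det_replace_row_eq_0_iff[OF assms(1,2)] by blast
next
  fix u
  assume "\<forall>k. T k \<subseteq> span (v ` (UNIV - {k}))" "\<forall>k. u k \<in> T k"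
  then have "det (\<chi> i. if i = k then u k else v i) = 0" for k
    using det_replace_row_eq_0_iff[OF assms(1,2)] by blast
  then show "(\<Sum>k\<in>UNIV. det (\<chi> i. if i = k then u k else v i)) = 0"
    by simp
qed

lemma auerbach_basis_range_iff:
  fixes v :: "'n::finite \<Rightarrow> real^'n"
  assumes "inj v" "independent (range v)"
  shows "auerbach_basis N (range v) \<longleftrightarrow>
    (\<forall>k. N (v k) = 1 \<and> (\<forall>y\<in>span (v ` (UNIV - {k})). birkhoff_orth N (v k) y))"
proof -
  have "range v - {v k} = v ` (UNIV - {k})" for k
    using assms(1) by (auto simp: inj_eq)
  then show ?thesis
    using assms span_range_eq_UNIV[OF assms] by (auto simp: auerbach_basis_def)
qed

theorem mainTheorem2:
  fixes N :: "real^'n \<Rightarrow> real" and v :: "'n \<Rightarrow> real^'n"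
  assumes "is_norm N" and "smooth_norm N"
    and "\<forall>i. v i \<in> unit_sphere N"
    and "inj v" and "independent (range v)"
  shows "auerbach_basis N (range v) \<longleftrightarrow>
    (\<forall>u :: 'n \<Rightarrow> real^'n. (\<forall>k. u k \<in> tangent_space (unit_sphere N) (v k)) \<longrightarrow>
       (\<Sum>k\<in>UNIV. det (\<chi> i. if i = k then u k else v i)) = 0)"
proof -
  note N = assms(1) and indep = assms(4,5)
  have unit: "N (v k) = 1" for k
    using assms(3) by (simp add: unit_sphere_def)
  then have nonzero: "v k \<noteq> 0" for k
    using is_norm_0[OF N] by (metis zero_neq_one)
  have "\<forall>k. \<exists>L. linear L \<and> gateaux_derivative N (v k) L"
    using assms(2) nonzero unfolding smooth_norm_def gateaux_derivative_def by blast
  then obtain L where lin: "\<And>k. linear (L k)" and D: "\<And>k. gateaux_derivative N (v k) (L k)"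
    by metis
  have tangent: "tangent_space (unit_sphere N) (v k) = {u. L k u = 0}" for k
    using tangent_space_unit_sphere_eq[OF N D unit] .
  then have zero_tangent: "0 \<in> tangent_space (unit_sphere N) (v k)" for k
    using linear_0[OF lin] by simp
  have "auerbach_basis N (range v) \<longleftrightarrow> (\<forall>k. span (v ` (UNIV - {k})) \<subseteq> {u. L k u = 0})"
    by (simp add: auerbach_basis_range_iff[OF indep] unit subset_eq
        birkhoff_orth_iff_gateaux_derivative_eq_0[OF N D])
  also have "\<dots> \<longleftrightarrow> (\<forall>k. {u. L k u = 0} \<subseteq> span (v ` (UNIV - {k})))"
    using span_subset_kernel_iff_kernel_subset_span[OF lin span_insert_others_eq_UNIV[OF indep]
        independent_range_imp_not_in_span_others[OF indep]
        gateaux_derivative_self_neq_0[OF N D nonzero]]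
    by blast
  finally show ?thesis
    unfolding sum_det_replace_row_eq_0_iff[OF indep zero_tangent] unfolding tangent .
qed

end
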